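(* The Grigorchuk group is intersection-saturated.
   Context: The Grigorchuk group is the (first) Grigorchuk group, the subgroup of automorphisms of the binary rooted tree generated by the four standard automorphisms $a,b,c,d$. For an integer $n\geq 1$ write $[n]=\{1,\dots,n\}$. An $n$-configuration is a map $c\colon \mathcal{P}([n])\setminus\{\emptyset\}\to\{0,1\}$. An $n$-configuration $c$ is realisable in a group $G$ if there exist subgroups $H_1,\dots,H_n\leq G$ such that for every non-empty subset $I\subseteq[n]$, the subgroup $\bigcap_{i\in I}H_i$ is finitely generated if and only if $c(I)=0$. A group $G$ is intersection-saturated if for every $n\geq 1$, every $n$-configuration is realisable in $G$. *)

theory Defs
  imports "HOL-Algebra.Algebra"
begin

text \<open>Vertices of the binary rooted tree are finite words over {0,1}, encoded as
  bool lists (False = 0, True = 1); the root is the empty word.\<close>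

fun grig_a :: "bool list \<Rightarrow> bool list" where
  "grig_a [] = []"
| "grig_a (x # w) = (\<not> x) # w"

fun grig_b :: "bool list \<Rightarrow> bool list"
and grig_c :: "bool list \<Rightarrow> bool list"
and grig_d :: "bool list \<Rightarrow> bool list" where
  "grig_b [] = []"
| "grig_b (False # w) = False # grig_a w"
| "grig_b (True # w) = True # grig_c w"
| "grig_c [] = []"
| "grig_c (False # w) = False # grig_a w"
| "grig_c (True # w) = True # grig_d w"
| "grig_d [] = []"
| "grig_d (False # w) = False # w"
| "grig_d (True # w) = True # grig_b w"

definition grigorchuk_group :: "(bool list \<Rightarrow> bool list) monoid" where
  "grigorchuk_group = (BijGroup (UNIV :: bool list set))
     \<lparr>carrier := generate (BijGroup (UNIV :: bool list set)) {grig_a, grig_b, grig_c, grig_d}\<rparr>"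

definition fg_subgroup :: "('a, 'b) monoid_scheme \<Rightarrow> 'a set \<Rightarrow> bool" where
  "fg_subgroup G H \<longleftrightarrow> subgroup H G \<and> (\<exists>S. finite S \<and> S \<subseteq> H \<and> generate G S = H)"

definition configuration :: "nat \<Rightarrow> (nat set \<Rightarrow> nat) \<Rightarrow> bool" where
  "configuration n c \<longleftrightarrow> (\<forall>I. I \<subseteq> {1..n} \<and> I \<noteq> {} \<longrightarrow> c I \<in> {0, 1})"

definition realisable :: "('a, 'b) monoid_scheme \<Rightarrow> nat \<Rightarrow> (nat set \<Rightarrow> nat) \<Rightarrow> bool" where
  "realisable G n c \<longleftrightarrow> (\<exists>H :: nat \<Rightarrow> 'a set.
      (\<forall>i \<in> {1..n}. subgroup (H i) G) \<and>
      (\<forall>I. I \<subseteq> {1..n} \<and> I \<noteq> {} \<longrightarrow> (fg_subgroup G (\<Inter>i\<in>I. H i) \<longleftrightarrow> c I = 0)))"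

definition intersection_saturated :: "('a, 'b) monoid_scheme \<Rightarrow> bool" where
  "intersection_saturated G \<longleftrightarrow>
     (\<forall>n \<ge> 1. \<forall>c. configuration n c \<longrightarrow> realisable G n c)"

end

theory Submission
  imports Defs
begin

text \<open>
  Enumerate the sets \<open>J\<^sub>0, ..., J\<^sub>m\<^sub>-\<^sub>1\<close> with \<open>c J \<noteq> 0\<close>. The Grigorchuk group contains the
  branching subgroup \<open>K = \<langle>(ab)\<^sup>2, (abad)\<^sup>2, (bada)\<^sup>2\<rangle>\<close>, which contains \<open>K \<times> K\<close> geometrically;
  hence it contains every automorphism acting by elements of \<open>K\<close> below finitely many pairwise
  incomparable vertices. Give each \<open>J\<^sub>t\<close> a block of \<open>|J\<^sub>t|\<close> such vertices, arranged in a cycle whose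
  edges are labelled by the elements of \<open>J\<^sub>t\<close>. The subgroup \<open>H\<^sub>i\<close> consists of the elements whose
  values at the two ends of every edge labelled \<open>i\<close> agree, up to conjugation by \<open>d\<close> across the
  edge that closes the cycle, and which are trivial on the blocks with \<open>i \<notin> J\<^sub>t\<close>.

  If \<open>I = J\<^sub>t\<close>, every edge of block \<open>t\<close> is constrained, so the intersection of the \<open>H\<^sub>i\<close>, \<open>i \<in> I\<close>,
  acts on that block by a single element of \<open>K\<close> commuting with \<open>d\<close>. Such elements fix the vertices
  \<open>1\<^sup>3\<^sup>j0\<close>, and the intersection separates these vertices by its sections there, whereas finitely
  many finite-state generators produce only finitely many patterns of sections; so the intersection
  is not finitely generated. Otherwise every constrained block has a free edge, the intersection is
  a finite product of copies of \<open>K\<close>, and it is finitely generated.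
\<close>

lemma grig_relations [simp]:
  "grig_a (grig_a w) = w \<and> grig_b (grig_b w) = w \<and> grig_c (grig_c w) = w \<and> grig_d (grig_d w) = w
   \<and> grig_b (grig_c w) = grig_d w \<and> grig_c (grig_b w) = grig_d w
   \<and> grig_b (grig_d w) = grig_c w \<and> grig_d (grig_b w) = grig_c w
   \<and> grig_c (grig_d w) = grig_b w \<and> grig_d (grig_c w) = grig_b w"
proof (induction w)
  case (Cons x w)
  then show ?case by (cases x) auto
qed simp

lemma bij_grig: "bij grig_a" "bij grig_b" "bij grig_c" "bij grig_d"
  by (auto intro: involuntory_imp_bij)

abbreviation inv_fun :: "('a \<Rightarrow> 'b) \<Rightarrow> 'b \<Rightarrow> 'a" where
  "inv_fun f \<equiv> inv_into UNIV f"

abbreviation Bij_UNIV :: "('a \<Rightarrow> 'a) monoid" where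
  "Bij_UNIV \<equiv> BijGroup UNIV"

lemma carrier_Bij_UNIV: "carrier Bij_UNIV = {f. bij f}"
  by (auto simp: BijGroup_def Bij_def)

lemma mult_Bij_UNIV: "bij f \<Longrightarrow> bij g \<Longrightarrow> f \<otimes>\<^bsub>Bij_UNIV\<^esub> g = f \<circ> g"
  by (auto simp: BijGroup_def Bij_def compose_def fun_eq_iff)

lemma one_Bij_UNIV: "\<one>\<^bsub>Bij_UNIV\<^esub> = id"
  by (auto simp: BijGroup_def fun_eq_iff)

lemma inv_Bij_UNIV: "bij f \<Longrightarrow> inv\<^bsub>Bij_UNIV\<^esub> f = inv_fun f"
  by (simp add: inv_BijGroup Bij_def restrict_UNIV)

lemma group_Bij_UNIV: "group Bij_UNIV"
  by (rule group_BijGroup)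

lemma inv_fun_unique:
  assumes "bij g" "f \<circ> g = id"
  shows "inv_fun g = f"
proof -
  have "g \<circ> inv_fun g = id" using assms(1) bij_is_surj surj_iff by blast
  then have "(f \<circ> g) \<circ> inv_fun g = f" by (simp add: comp_assoc)
  then show ?thesis using assms(2) by simp
qed

lemma hom_Bij_UNIVI:
  assumes "\<And>f. bij f \<Longrightarrow> bij (h f)"
    and "\<And>f g. bij f \<Longrightarrow> bij g \<Longrightarrow> h (f \<circ> g) = h f \<circ> h g"
  shows "h \<in> hom Bij_UNIV Bij_UNIV"
  using assms by (auto simp: hom_def carrier_Bij_UNIV mult_Bij_UNIV bij_comp)

lemma generate_Bij_UNIV_image:
  assumes "h \<in> hom Bij_UNIV Bij_UNIV" and "T \<subseteq> {f. bij f}"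
  shows "h ` generate Bij_UNIV T = generate Bij_UNIV (h ` T)"
proof -
  interpret group_hom Bij_UNIV Bij_UNIV h
    using assms(1) by (simp add: group_hom_def group_hom_axioms_def group_Bij_UNIV)
  show ?thesis using generate_img assms(2) by (simp add: carrier_Bij_UNIV)
qed

subsection \<open>Tree maps and their sections\<close>

definition tree_map :: "('a list \<Rightarrow> 'a list) \<Rightarrow> bool" where
  "tree_map g \<longleftrightarrow> (\<forall>w. length (g w) = length w) \<and> (\<forall>u w. take (length u) (g (u @ w)) = g u)"

definition sect :: "('a list \<Rightarrow> 'a list) \<Rightarrow> 'a list \<Rightarrow> 'a list \<Rightarrow> 'a list" where
  "sect g u = (\<lambda>w. drop (length u) (g (u @ w)))"

lemma tree_map_length: "tree_map g \<Longrightarrow> length (g w) = length w"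
  by (simp add: tree_map_def)

lemma tree_map_append:
  assumes "tree_map g"
  shows "g (u @ w) = g u @ sect g u w"
proof -
  have "take (length u) (g (u @ w)) = g u" using assms by (simp add: tree_map_def)
  then show ?thesis unfolding sect_def by (metis append_take_drop_id)
qed

lemma tree_map_id: "tree_map id"
  by (simp add: tree_map_def)

lemma tree_map_comp_append:
  assumes "tree_map f" "tree_map g"
  shows "f (g (u @ w)) = f (g u) @ sect f (g u) (sect g u w)"
proof -
  have "f (g (u @ w)) = f (g u @ sect g u w)"
    using tree_map_append[OF assms(2)] by (rule arg_cong)
  also have "\<dots> = f (g u) @ sect f (g u) (sect g u w)"
    by (rule tree_map_append[OF assms(1)])
  finally show ?thesis .
qed

lemma tree_map_comp:
  assumes "tree_map f" "tree_map g"
  shows "tree_map (f \<circ> g)"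
proof -
  have "take (length u) ((f \<circ> g) (u @ w)) = (f \<circ> g) u" for u w
    using tree_map_comp_append[OF assms] tree_map_length[OF assms(1)] tree_map_length[OF assms(2)]
    by simp
  moreover have "length ((f \<circ> g) w) = length w" for w
    using tree_map_length[OF assms(1)] tree_map_length[OF assms(2)] by simp
  ultimately show ?thesis
    unfolding tree_map_def by blast
qed

lemma sect_comp:
  assumes "tree_map f" "tree_map g"
  shows "sect (f \<circ> g) u = sect f (g u) \<circ> sect g u"
proof
  fix w
  have "sect (f \<circ> g) u w = drop (length u) (f (g (u @ w)))"
    by (simp add: sect_def)
  then show "sect (f \<circ> g) u w = (sect f (g u) \<circ> sect g u) w"
    using tree_map_comp_append[OF assms] tree_map_length[OF assms(1), of "g u"]
      tree_map_length[OF assms(2), of u]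
    by simp
qed

lemma sect_append: "sect g (u @ v) = sect (sect g u) v"
  by (simp add: sect_def fun_eq_iff add.commute)

lemma sect_Nil [simp]: "sect g [] = g"
  by (simp add: sect_def fun_eq_iff)

lemma sect_id [simp]: "sect id u = id"
  by (simp add: sect_def fun_eq_iff)

lemma tree_map_sect:
  assumes "tree_map g"
  shows "tree_map (sect g u)"
proof -
  have length: "length (sect g u w) = length w" for w
    using tree_map_length[OF assms] by (simp add: sect_def)
  have "sect g u (v @ w) = sect g u v @ sect g (u @ v) w" for v w
  proof -
    have "g (u @ v @ w) = g u @ sect g u v @ sect g (u @ v) w"
      using tree_map_append[OF assms, of "u @ v" w] tree_map_append[OF assms, of u v] by simp
    moreover have "sect g u (v @ w) = drop (length u) (g (u @ v @ w))"
      by (simp add: sect_def)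
    ultimately show ?thesis
      using tree_map_length[OF assms, of u] by simp
  qed
  then show ?thesis using length by (simp add: tree_map_def)
qed

lemma inj_sect:
  assumes "tree_map g" "inj g"
  shows "inj (sect g u)"
proof (rule injI)
  fix x y
  assume "sect g u x = sect g u y"
  then have "g (u @ x) = g (u @ y)" using tree_map_append[OF assms(1)] by metis
  then show "x = y" using assms(2) by (simp add: inj_eq)
qed

definition finite_state :: "('a list \<Rightarrow> 'a list) \<Rightarrow> bool" where
  "finite_state g \<longleftrightarrow> bij g \<and> tree_map g \<and> finite (range (sect g))"

lemma finite_state_comp:
  assumes "finite_state f" "finite_state g"
  shows "finite_state (f \<circ> g)"
proof -
  have "sect (f \<circ> g) u = (\<lambda>(p, q). p \<circ> q) (sect f (g u), sect g u)" for u
    using assms by (simp add: finite_state_def sect_comp)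
  then have "range (sect (f \<circ> g)) \<subseteq> (\<lambda>(p, q). p \<circ> q) ` (range (sect f) \<times> range (sect g))"
    by auto
  moreover have "finite ((\<lambda>(p, q). p \<circ> q) ` (range (sect f) \<times> range (sect g)))"
    using assms by (auto simp: finite_state_def)
  ultimately have "finite (range (sect (f \<circ> g)))"
    using finite_subset by blast
  then show ?thesis
    using assms by (simp add: finite_state_def tree_map_comp bij_comp)
qed

subsection \<open>The Grigorchuk group consists of finite-state tree automorphisms\<close>

lemma length_grig:
  "length (grig_a w) = length w \<and> length (grig_b w) = length w \<and>
   length (grig_c w) = length w \<and> length (grig_d w) = length w"
proof (induction w)
  case (Cons x w)
  then show ?case by (cases x) auto
qed simp

lemma take_grig_append:
  "\<forall>w. take (length u) (grig_a (u @ w)) = grig_a u \<and> take (length u) (grig_b (u @ w)) = grig_b u \<and>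
     take (length u) (grig_c (u @ w)) = grig_c u \<and> take (length u) (grig_d (u @ w)) = grig_d u"
proof (induction u)
  case (Cons x u)
  then show ?case by (cases x) (simp_all add: length_grig)
qed simp

lemma tree_map_grig: "tree_map grig_a" "tree_map grig_b" "tree_map grig_c" "tree_map grig_d"
  using length_grig take_grig_append by (auto simp: tree_map_def)

lemma sect_grig_single:
  "sect grig_a [x] = id" "sect grig_b [False] = grig_a" "sect grig_b [True] = grig_c"
  "sect grig_c [False] = grig_a" "sect grig_c [True] = grig_d"
  "sect grig_d [False] = id" "sect grig_d [True] = grig_b"
  by (cases x; simp add: sect_def fun_eq_iff)+

lemma sect_grig_nucleus:
  assumes "g \<in> {id, grig_a, grig_b, grig_c, grig_d}"
  shows "sect g u \<in> {id, grig_a, grig_b, grig_c, grig_d}"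
  using assms
proof (induction u arbitrary: g)
  case (Cons x u)
  from Cons.prems have "sect g [x] \<in> {id, grig_a, grig_b, grig_c, grig_d}"
    by (cases x) (auto simp only: insert_iff sect_grig_single sect_id)
  then have "sect (sect g [x]) u \<in> {id, grig_a, grig_b, grig_c, grig_d}"
    by (rule Cons.IH)
  then show ?case
    using sect_append[of g "[x]" u] by (simp only: append_Cons append_Nil)
qed simp

lemma finite_state_grig_nucleus:
  assumes "g \<in> {id, grig_a, grig_b, grig_c, grig_d}"
  shows "finite_state g"
proof -
  have "range (sect g) \<subseteq> {id, grig_a, grig_b, grig_c, grig_d}"
    using sect_grig_nucleus[OF assms] by auto
  then have "finite (range (sect g))"
    by (rule finite_subset) simp
  then show ?thesis
    using assms bij_grig tree_map_grig tree_map_id by (auto simp: finite_state_def)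
qed

lemma inv_fun_grig:
  "inv_fun grig_a = grig_a" "inv_fun grig_b = grig_b" "inv_fun grig_c = grig_c" "inv_fun grig_d = grig_d"
  by (rule inv_fun_unique; simp add: bij_grig fun_eq_iff)+

abbreviation grig_gens :: "(bool list \<Rightarrow> bool list) set" where
  "grig_gens \<equiv> {grig_a, grig_b, grig_c, grig_d}"

lemma carrier_grigorchuk_group: "carrier grigorchuk_group = generate Bij_UNIV grig_gens"
  by (simp add: grigorchuk_group_def)

lemma finite_state_grigorchuk_group:
  "g \<in> carrier grigorchuk_group \<Longrightarrow> finite_state g"
  unfolding carrier_grigorchuk_group
proof (induction rule: generate.induct)
  case one
  then show ?case
    unfolding one_Bij_UNIV by (rule finite_state_grig_nucleus) (rule insertI1)
next
  case (incl h)
  then show ?case by (intro finite_state_grig_nucleus) blast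
next
  case (inv h)
  then have "inv\<^bsub>Bij_UNIV\<^esub> h = h"
    by (auto simp: inv_Bij_UNIV bij_grig inv_fun_grig)
  then show ?case
    using inv by (metis finite_state_grig_nucleus insertI2)
next
  case (eng h1 h2)
  then have "h1 \<otimes>\<^bsub>Bij_UNIV\<^esub> h2 = h1 \<circ> h2"
    by (simp add: finite_state_def mult_Bij_UNIV)
  then show ?case
    using eng.IH finite_state_comp by metis
qed

lemma subgroup_grigorchuk_group: "subgroup (carrier grigorchuk_group) Bij_UNIV"
  unfolding carrier_grigorchuk_group
  using bij_grig by (intro group.generate_is_subgroup[OF group_Bij_UNIV]) (auto simp: carrier_Bij_UNIV)

lemma group_grigorchuk_group: "group grigorchuk_group"
  using group.subgroup_imp_group[OF group_Bij_UNIV subgroup_grigorchuk_group]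
  by (simp add: grigorchuk_group_def)

lemma grigorchuk_group_simps:
  "x \<in> carrier grigorchuk_group \<Longrightarrow> y \<in> carrier grigorchuk_group \<Longrightarrow>
     x \<otimes>\<^bsub>grigorchuk_group\<^esub> y = x \<circ> y"
  "\<one>\<^bsub>grigorchuk_group\<^esub> = id"
  "x \<in> carrier grigorchuk_group \<Longrightarrow> inv\<^bsub>grigorchuk_group\<^esub> x = inv_fun x"
  using finite_state_grigorchuk_group group.m_inv_consistent[OF group_Bij_UNIV subgroup_grigorchuk_group]
  by (simp_all add: grigorchuk_group_def mult_Bij_UNIV one_Bij_UNIV inv_Bij_UNIV finite_state_def)

lemma generate_grigorchuk_group:
  "S \<subseteq> carrier grigorchuk_group \<Longrightarrow> generate grigorchuk_group S = generate Bij_UNIV S"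
  using group.generate_consistent[OF group_Bij_UNIV _ subgroup_grigorchuk_group]
  by (simp add: grigorchuk_group_def)

lemma subgroup_Bij_UNIV_if_subgroup_grigorchuk_group:
  "subgroup Y grigorchuk_group \<Longrightarrow> subgroup Y Bij_UNIV"
  using group.incl_subgroup[OF group_Bij_UNIV subgroup_grigorchuk_group]
  by (simp add: grigorchuk_group_def)

subsection \<open>The branching subgroup K\<close>

definition "grig_t = grig_a \<circ> grig_b \<circ> grig_a \<circ> grig_b"
definition "grig_t' = grig_b \<circ> grig_a \<circ> grig_b \<circ> grig_a"
definition "grig_u = grig_a \<circ> grig_b \<circ> grig_a \<circ> grig_d \<circ> grig_a \<circ> grig_b \<circ> grig_a \<circ> grig_d"
definition "grig_u' = grig_d \<circ> grig_a \<circ> grig_b \<circ> grig_a \<circ> grig_d \<circ> grig_a \<circ> grig_b \<circ> grig_a"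
definition "grig_v = grig_b \<circ> grig_a \<circ> grig_d \<circ> grig_a \<circ> grig_b \<circ> grig_a \<circ> grig_d \<circ> grig_a"
definition "grig_v' = grig_a \<circ> grig_d \<circ> grig_a \<circ> grig_b \<circ> grig_a \<circ> grig_d \<circ> grig_a \<circ> grig_b"

lemmas grig_K_word_defs = grig_t_def grig_t'_def grig_u_def grig_u'_def grig_v_def grig_v'_def

definition grig_K :: "(bool list \<Rightarrow> bool list) set" where
  "grig_K = generate Bij_UNIV {grig_t, grig_u, grig_v}"

lemma grig_K_words_in_grigorchuk_group:
  "{grig_t, grig_t', grig_u, grig_u', grig_v, grig_v'} \<subseteq> carrier grigorchuk_group"
proof -
  have gens: "grig_gens \<subseteq> carrier grigorchuk_group"
    by (auto simp: carrier_grigorchuk_group intro: generate.incl)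
  have "x \<circ> y \<in> carrier grigorchuk_group"
    if "x \<in> carrier grigorchuk_group" "y \<in> carrier grigorchuk_group" for x y
    using group.subgroupE(4)[OF group_grigorchuk_group, of "carrier grigorchuk_group"]
      group.subgroup_self[OF group_grigorchuk_group] that grigorchuk_group_simps(1)
    by metis
  then show ?thesis
    using gens unfolding grig_K_word_defs by simp
qed

lemma grig_K_subset_grigorchuk_group: "grig_K \<subseteq> carrier grigorchuk_group"
  unfolding grig_K_def carrier_grigorchuk_group
  using grig_K_words_in_grigorchuk_group
  by (intro group.generate_subgroup_incl[OF group_Bij_UNIV])
    (auto simp: carrier_grigorchuk_group subgroup_grigorchuk_group[unfolded carrier_grigorchuk_group])

lemma subgroup_grig_K: "subgroup grig_K Bij_UNIV"
  unfolding grig_K_def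
  using grig_K_words_in_grigorchuk_group finite_state_grigorchuk_group
  by (intro group.generate_is_subgroup[OF group_Bij_UNIV]) (auto simp: carrier_Bij_UNIV finite_state_def)

lemma finite_state_grig_K: "g \<in> grig_K \<Longrightarrow> finite_state g"
  using grig_K_subset_grigorchuk_group finite_state_grigorchuk_group by blast

lemma bij_grig_K: "g \<in> grig_K \<Longrightarrow> bij g"
  using finite_state_grig_K finite_state_def by blast

lemma grig_K_comp: "f \<in> grig_K \<Longrightarrow> g \<in> grig_K \<Longrightarrow> f \<circ> g \<in> grig_K"
  using subgroup.m_closed[OF subgroup_grig_K] mult_Bij_UNIV bij_grig_K by metis

lemma grig_K_inv: "f \<in> grig_K \<Longrightarrow> inv_fun f \<in> grig_K"
  using subgroup.m_inv_closed[OF subgroup_grig_K] inv_Bij_UNIV bij_grig_K by metis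

lemma grig_K_id: "id \<in> grig_K"
  using subgroup.one_closed[OF subgroup_grig_K] one_Bij_UNIV by metis

lemma grig_K_words: "grig_t \<in> grig_K" "grig_u \<in> grig_K" "grig_v \<in> grig_K"
  "grig_t' \<in> grig_K" "grig_u' \<in> grig_K" "grig_v' \<in> grig_K"
proof -
  show gens: "grig_t \<in> grig_K" "grig_u \<in> grig_K" "grig_v \<in> grig_K"
    unfolding grig_K_def by (auto intro: generate.incl)
  have "grig_t' \<circ> grig_t = id" "grig_u' \<circ> grig_u = id" "grig_v' \<circ> grig_v = id"
    by (simp_all add: grig_K_word_defs fun_eq_iff)
  then have "inv_fun grig_t = grig_t'" "inv_fun grig_u = grig_u'" "inv_fun grig_v = grig_v'"
    using gens bij_grig_K inv_fun_unique by blast+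
  then show "grig_t' \<in> grig_K" "grig_u' \<in> grig_K" "grig_v' \<in> grig_K"
    using gens grig_K_inv by metis+
qed

lemma grig_t_neq_id: "grig_t \<noteq> id"
proof
  assume "grig_t = id"
  then have "grig_t [False, False] = [False, False]" by simp
  then show False by (simp add: grig_t_def)
qed

lemma hom_image_grig_K:
  assumes "h \<in> hom Bij_UNIV Bij_UNIV"
    and "h grig_t \<in> grig_K" "h grig_u \<in> grig_K" "h grig_v \<in> grig_K"
    and "g \<in> grig_K"
  shows "h g \<in> grig_K"
proof -
  have "{grig_t, grig_u, grig_v} \<subseteq> {f. bij f}"
    using grig_K_words bij_grig_K by blast
  then have "h ` grig_K = generate Bij_UNIV (h ` {grig_t, grig_u, grig_v})"
    unfolding grig_K_def by (rule generate_Bij_UNIV_image[OF assms(1)])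
  then have "h g \<in> generate Bij_UNIV (h ` {grig_t, grig_u, grig_v})"
    using assms(5) by blast
  also have "\<dots> \<subseteq> grig_K"
    using assms(2-4) subgroup_grig_K by (intro group.generate_subgroup_incl[OF group_Bij_UNIV]) auto
  finally show ?thesis .
qed

subsection \<open>Acting below a vertex\<close>

definition at_vertex :: "'a list \<Rightarrow> ('a list \<Rightarrow> 'a list) \<Rightarrow> 'a list \<Rightarrow> 'a list" where
  "at_vertex u f w = (if take (length u) w = u then u @ f (drop (length u) w) else w)"

lemma at_vertex_append [simp]: "at_vertex u f (u @ w) = u @ f w"
  by (simp add: at_vertex_def)

lemma at_vertex_outside: "\<nexists>y. w = u @ y \<Longrightarrow> at_vertex u f w = w"
  by (auto simp: at_vertex_def) (metis append_take_drop_id)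

lemma at_vertex_comp: "at_vertex u (f \<circ> g) = at_vertex u f \<circ> at_vertex u g"
proof
  fix w
  show "at_vertex u (f \<circ> g) w = (at_vertex u f \<circ> at_vertex u g) w"
    by (cases "\<exists>y. w = u @ y") (auto simp: at_vertex_outside)
qed

lemma at_vertex_id: "at_vertex u id = id"
proof
  fix w
  show "at_vertex u id w = id w"
    by (cases "\<exists>y. w = u @ y") (auto simp: at_vertex_outside)
qed

lemma bij_at_vertex:
  assumes "bij f"
  shows "bij (at_vertex u f)"
proof -
  have "f \<circ> inv_fun f = id" "inv_fun f \<circ> f = id"
    using surj_iff[THEN iffD1, OF bij_is_surj[OF assms]] inj_iff[THEN iffD1, OF bij_is_inj[OF assms]] .
  then have "at_vertex u f \<circ> at_vertex u (inv_fun f) = id" "at_vertex u (inv_fun f) \<circ> at_vertex u f = id"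
    by (simp_all add: at_vertex_comp[symmetric] at_vertex_id)
  then show ?thesis using o_bij by blast
qed

lemma hom_at_vertex: "at_vertex u \<in> hom Bij_UNIV Bij_UNIV"
  by (rule hom_Bij_UNIVI) (simp_all add: bij_at_vertex at_vertex_comp)

lemma at_vertex_Nil: "at_vertex [] f = f"
  by (simp add: at_vertex_def fun_eq_iff)

lemma at_vertex_Cons: "at_vertex (x # u) f = at_vertex [x] (at_vertex u f)"
proof
  fix w
  show "at_vertex (x # u) f w = at_vertex [x] (at_vertex u f) w"
  proof (cases "\<exists>y. w = x # u @ y")
    case True
    then obtain y where "w = x # u @ y" by blast
    then show ?thesis
      using at_vertex_append[of "x # u" f y] at_vertex_append[of "[x]" "at_vertex u f" "u @ y"]
      by simp
  next
    case False
    have "at_vertex [x] (at_vertex u f) w = w"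
    proof (cases "\<exists>y. w = x # y")
      case True
      then obtain y where y: "w = x # y" by blast
      then have "\<nexists>z. y = u @ z" using False by auto
      then show ?thesis using y at_vertex_append[of "[x]" _ y] at_vertex_outside[of y u] by simp
    qed (simp add: at_vertex_outside)
    then show ?thesis
      using False at_vertex_outside[of w "x # u"] by simp
  qed
qed

lemma at_vertex_single:
  "at_vertex [x] f w = (case w of [] \<Rightarrow> [] | y # v \<Rightarrow> if y = x then x # f v else y # v)"
  by (auto simp: at_vertex_def split: list.split)

lemma sect_at_vertex_self: "sect (at_vertex u g) u = g"
  by (simp add: sect_def fun_eq_iff)

lemma sect_at_vertex_apart:
  assumes "\<And>w y. u' @ w \<noteq> u @ y"
  shows "sect (at_vertex u g) u' = id"
proof
  fix w
  show "sect (at_vertex u g) u' w = id w"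
    using assms[of w] by (simp add: sect_def at_vertex_outside)
qed

text \<open>In wreath-recursion notation \<open>u = (1, t)\<close> and \<open>v = (t, 1)\<close>; with the other identities
  this shows \<open>K \<times> K \<le> K\<close>.\<close>

lemma at_vertex_K_words:
  "at_vertex [True] grig_t = grig_u"
  "at_vertex [False] grig_t = grig_v"
  "at_vertex [True] grig_u = grig_u \<circ> grig_t' \<circ> grig_u' \<circ> grig_t"
  "at_vertex [True] grig_v = grig_u' \<circ> grig_t \<circ> grig_u \<circ> grig_t'"
  "at_vertex [False] grig_u = grig_v \<circ> grig_t \<circ> grig_v' \<circ> grig_t'"
  "at_vertex [False] grig_v = grig_v' \<circ> grig_t' \<circ> grig_v \<circ> grig_t"
  by (auto simp: fun_eq_iff at_vertex_single grig_K_word_defs split: list.split)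

lemma grig_K_at_vertex: "g \<in> grig_K \<Longrightarrow> at_vertex u g \<in> grig_K"
proof (induction u arbitrary: g)
  case Nil
  then show ?case by (simp add: at_vertex_Nil)
next
  case (Cons x u)
  have "at_vertex [x] grig_t \<in> grig_K" "at_vertex [x] grig_u \<in> grig_K" "at_vertex [x] grig_v \<in> grig_K"
    by (cases x; simp add: at_vertex_K_words grig_K_comp grig_K_words)+
  then have "at_vertex [x] g \<in> grig_K" if "g \<in> grig_K" for g
    using hom_image_grig_K[OF hom_at_vertex _ _ _ that] by blast
  then show ?case
    using Cons unfolding at_vertex_Cons[of x u g] by blast
qed

definition conj_d :: "(bool list \<Rightarrow> bool list) \<Rightarrow> bool list \<Rightarrow> bool list" where
  "conj_d f = grig_d \<circ> f \<circ> grig_d"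

lemma conj_d_comp: "conj_d (f \<circ> g) = conj_d f \<circ> conj_d g"
  by (simp add: conj_d_def fun_eq_iff)

lemma conj_d_id: "conj_d id = id"
  by (simp add: conj_d_def fun_eq_iff)

lemma bij_conj_d: "bij f \<Longrightarrow> bij (conj_d f)"
  by (simp add: conj_d_def bij_comp bij_grig)

lemma conj_d_fixed_iff: "conj_d f = f \<longleftrightarrow> f \<circ> grig_d = grig_d \<circ> f"
proof
  assume "conj_d f = f"
  then have "f \<circ> grig_d = (grig_d \<circ> f \<circ> grig_d) \<circ> grig_d"
    by (simp add: conj_d_def)
  also have "\<dots> = grig_d \<circ> f"
    by (simp add: fun_eq_iff)
  finally show "f \<circ> grig_d = grig_d \<circ> f" .
next
  assume "f \<circ> grig_d = grig_d \<circ> f"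
  then show "conj_d f = f"
    by (simp add: conj_d_def fun_eq_iff)
qed

lemma conj_d_K_words: "conj_d grig_t = grig_u' \<circ> grig_t" "conj_d grig_u = grig_u'" "conj_d grig_v = grig_v"
proof -
  show "conj_d grig_t = grig_u' \<circ> grig_t" "conj_d grig_u = grig_u'"
    by (simp_all add: fun_eq_iff conj_d_def grig_K_word_defs)
  have "conj_d grig_v w = grig_v w" for w
  proof (cases w)
    case (Cons x v)
    then show ?thesis by (cases x; cases v) (simp_all add: conj_d_def grig_K_word_defs)
  qed (simp add: conj_d_def grig_K_word_defs)
  then show "conj_d grig_v = grig_v" ..
qed

lemma grig_K_conj_d:
  assumes "g \<in> grig_K"
  shows "conj_d g \<in> grig_K"
proof -
  have "conj_d \<in> hom Bij_UNIV Bij_UNIV"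
    by (rule hom_Bij_UNIVI) (simp_all add: bij_conj_d conj_d_comp)
  then show ?thesis
    using hom_image_grig_K assms by (simp add: conj_d_K_words grig_K_comp grig_K_words)
qed

definition twist :: "bool \<Rightarrow> (bool list \<Rightarrow> bool list) \<Rightarrow> bool list \<Rightarrow> bool list" where
  "twist b f = (if b then conj_d f else f)"

lemma twist_comp: "twist b (f \<circ> g) = twist b f \<circ> twist b g"
  by (simp add: twist_def conj_d_comp)

lemma twist_id: "twist b id = id"
  by (simp add: twist_def conj_d_id)

lemma grig_K_twist: "f \<in> grig_K \<Longrightarrow> twist b f \<in> grig_K"
  by (simp add: twist_def grig_K_conj_d)

lemma bij_twist: "bij f \<Longrightarrow> bij (twist b f)"
  by (simp add: twist_def bij_conj_d)

lemma inv_fun_twist: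
  assumes "bij f"
  shows "inv_fun (twist b f) = twist b (inv_fun f)"
proof (rule inv_fun_unique)
  show "bij (twist b f)" using assms by (rule bij_twist)
  have "inv_fun f \<circ> f = id"
    using inj_iff[THEN iffD1, OF bij_is_inj[OF assms]] .
  then show "twist b (inv_fun f) \<circ> twist b f = id"
    by (metis twist_comp twist_id)
qed

lemma twist_apply: "twist b f w = (if b then grig_d (f (grig_d w)) else f w)"
  by (simp add: twist_def conj_d_def)

subsection \<open>Spreading a family of automorphisms over disjoint subtrees\<close>

type_synonym family = "nat \<times> nat \<Rightarrow> bool list \<Rightarrow> bool list"

lemma replicate_True_False_append_eq:
  "replicate p True @ False # z = replicate q True @ False # w \<Longrightarrow> p = q \<and> z = w"
proof (induction p arbitrary: q)
  case 0
  then show ?case by (cases q) auto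
next
  case (Suc p)
  then show ?case by (cases q) auto
qed

text \<open>Distinct slots are incomparable vertices, so the subtrees below them are disjoint.\<close>

definition slot :: "nat \<times> nat \<Rightarrow> bool list" where
  "slot x = replicate (prod_encode x) True @ [False]"

definition spread :: "family \<Rightarrow> bool list \<Rightarrow> bool list" where
  "spread F w = (if False \<in> set w then
     (let p = length (takeWhile id w) in replicate p True @ False # F (prod_decode p) (drop (Suc p) w))
   else w)"

lemma spread_slot [simp]: "spread F (slot x @ w) = slot x @ F x w"
proof -
  have "takeWhile id (replicate p True @ False # w) = replicate p True"
    "drop (Suc p) (replicate p True @ False # w) = w" for p
    by (induction p) auto
  then show ?thesis by (simp add: spread_def slot_def)
qed

lemma slot_decomp: "False \<in> set w \<Longrightarrow> \<exists>x z. w = slot x @ z"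
proof (induction w)
  case (Cons b w)
  show ?case
  proof (cases b)
    case True
    then obtain x z where "w = slot x @ z" using Cons by auto
    then have "b # w = slot (prod_decode (Suc (prod_encode x))) @ z"
      using True by (simp add: slot_def)
    then show ?thesis by blast
  next
    case False
    then have "b # w = slot (prod_decode 0) @ w" by (simp add: slot_def)
    then show ?thesis by blast
  qed
qed simp

lemma slot_append_eq:
  assumes "slot x @ z = slot y @ w"
  shows "x = y \<and> z = w"
proof -
  have "prod_encode x = prod_encode y \<and> z = w"
    using assms by (intro replicate_True_False_append_eq) (simp add: slot_def)
  then show ?thesis by (metis prod_encode_inverse)
qed

lemma spread_outside: "False \<notin> set w \<Longrightarrow> spread F w = w"
  by (simp add: spread_def)

lemma spread_comp: "spread (\<lambda>x. F x \<circ> G x) = spread F \<circ> spread G"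
proof
  fix w
  show "spread (\<lambda>x. F x \<circ> G x) w = (spread F \<circ> spread G) w"
    by (cases "False \<in> set w") (auto simp: spread_outside dest: slot_decomp)
qed

lemma spread_id: "spread (\<lambda>x. id) = id"
proof
  fix w
  show "spread (\<lambda>x. id) w = id w"
    by (cases "False \<in> set w") (auto simp: spread_outside dest: slot_decomp)
qed

lemma inj_spread: "inj spread"
proof (rule injI)
  fix F G :: family
  assume eq: "spread F = spread G"
  show "F = G"
  proof (intro ext)
    fix x w
    show "F x w = G x w" using fun_cong[OF eq, of "slot x @ w"] by simp
  qed
qed

lemma bij_spread:
  assumes "\<And>x. bij (F x)"
  shows "bij (spread F)"
proof -
  have "inv_fun (F x) \<circ> F x = id" "F x \<circ> inv_fun (F x) = id" for x
    using inj_iff[THEN iffD1, OF bij_is_inj[OF assms]] surj_iff[THEN iffD1, OF bij_is_surj[OF assms]] .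
  then have "(\<lambda>x. inv_fun (F x) \<circ> F x) = (\<lambda>x. id)" "(\<lambda>x. F x \<circ> inv_fun (F x)) = (\<lambda>x. id)"
    by simp_all
  then have "spread (\<lambda>x. inv_fun (F x)) \<circ> spread F = id" "spread F \<circ> spread (\<lambda>x. inv_fun (F x)) = id"
    by (metis spread_comp spread_id)+
  then show ?thesis using o_bij by blast
qed

lemma sect_spread: "sect (spread F) (slot x @ u) = sect (F x) u"
  by (simp add: sect_def fun_eq_iff)

definition single :: "'i \<Rightarrow> ('a \<Rightarrow> 'a) \<Rightarrow> 'i \<Rightarrow> 'a \<Rightarrow> 'a" where
  "single x g = (\<lambda>y. if y = x then g else id)"

lemma spread_single: "spread (single x g) = at_vertex (slot x) g"
proof
  fix w
  show "spread (single x g) w = at_vertex (slot x) g w"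
  proof (cases "False \<in> set w")
    case True
    then obtain y z where w: "w = slot y @ z" using slot_decomp by blast
    show ?thesis
    proof (cases "y = x")
      case False
      then have "\<nexists>u. slot y @ z = slot x @ u" using slot_append_eq by blast
      then show ?thesis using w False by (simp add: single_def at_vertex_outside)
    qed (simp add: w single_def)
  next
    case False
    then have "\<nexists>z. w = slot x @ z" by (auto simp: slot_def)
    then show ?thesis using False by (simp add: spread_outside at_vertex_outside)
  qed
qed

lemma single_comp_update: "(\<lambda>x. single a (F a) x \<circ> (F(a := id)) x) = F"
  by (rule ext) (simp add: single_def)

lemma multiplicative_finite_support:
  fixes \<Psi> :: "('i \<Rightarrow> 'a \<Rightarrow> 'a) \<Rightarrow> 'b \<Rightarrow> 'b"
  assumes mult: "\<And>F G. \<Psi> (\<lambda>x. F x \<circ> G x) = \<Psi> F \<circ> \<Psi> G" and one: "\<Psi> (\<lambda>x. id) = id"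
    and closed: "id \<in> Z" "\<And>f g. f \<in> Z \<Longrightarrow> g \<in> Z \<Longrightarrow> f \<circ> g \<in> Z"
    and fin: "finite {x. F x \<noteq> id}"
    and singles: "\<And>x. F x \<noteq> id \<Longrightarrow> \<Psi> (single x (F x)) \<in> Z"
  shows "\<Psi> F \<in> Z"
proof -
  have "\<Psi> F \<in> Z"
    if "finite P" "{x. F x \<noteq> id} = P" "\<And>x. F x \<noteq> id \<Longrightarrow> \<Psi> (single x (F x)) \<in> Z" for P F
    using that
  proof (induction P arbitrary: F rule: finite_induct)
    case empty
    then have "F x = id" for x by blast
    then have "F = (\<lambda>x. id)" by (rule ext)
    then have "\<Psi> F = id" using one by (simp only:)
    then show ?case using closed(1) by (simp only:)
  next
    case (insert a P)
    have "a \<in> {x. F x \<noteq> id}"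
      by (subst insert.prems(1)) (rule insertI1)
    then have single_a: "\<Psi> (single a (F a)) \<in> Z"
      using insert.prems(2) by blast
    have "\<Psi> (F(a := id)) \<in> Z"
    proof (rule insert.IH)
      have "{x. (F(a := id)) x \<noteq> id} = {x. F x \<noteq> id} - {a}" by auto
      then show "{x. (F(a := id)) x \<noteq> id} = P"
        using insert.prems(1) insert.hyps(2) by simp
      show "\<Psi> (single x ((F(a := id)) x)) \<in> Z" if "(F(a := id)) x \<noteq> id" for x
      proof (cases "x = a")
        case False
        then have Fx: "(F(a := id)) x = F x" by simp
        then have "F x \<noteq> id" using that by simp
        then show ?thesis unfolding Fx by (rule insert.prems(2))
      qed (use that in simp)
    qed
    moreover have "\<Psi> F = \<Psi> (single a (F a)) \<circ> \<Psi> (F(a := id))"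
      using mult[of "single a (F a)" "F(a := id)"] by (simp only: single_comp_update)
    ultimately show ?case
      using closed(2)[OF single_a] by (simp only:)
  qed
  then show ?thesis using fin singles by blast
qed

lemma grig_K_spread:
  assumes "\<And>x. F x \<in> grig_K" and "finite {x. F x \<noteq> id}"
  shows "spread F \<in> grig_K"
  using spread_comp spread_id grig_K_id grig_K_comp assms(2)
proof (rule multiplicative_finite_support)
  show "spread (single x (F x)) \<in> grig_K" for x
    unfolding spread_single using assms(1) by (rule grig_K_at_vertex)
qed

subsection \<open>Automorphisms commuting with d fix the vertices \<open>1\<^sup>3\<^sup>j0\<close>\<close>

definition spine_vertex :: "nat \<Rightarrow> bool list" where
  "spine_vertex j = replicate (3 * j) True @ [False]"

lemma replicate_add_3: "replicate (3 + k) True @ w = True # True # True # replicate k True @ w"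
  by (simp add: numeral_3_eq_3)

lemma grig_d_spine_vertex: "grig_d (spine_vertex j @ w) = spine_vertex j @ w"
  by (induction j) (simp_all add: spine_vertex_def replicate_add_3)

lemma conj_d_at_spine_vertex: "conj_d (at_vertex (spine_vertex j) f) = at_vertex (spine_vertex j) f"
proof -
  have "grig_d (at_vertex (spine_vertex j) f w) = at_vertex (spine_vertex j) f (grig_d w)" for w
  proof (cases "\<exists>y. w = spine_vertex j @ y")
    case True
    then show ?thesis by (auto simp: grig_d_spine_vertex)
  next
    case False
    moreover have "\<nexists>y. grig_d w = spine_vertex j @ y"
      using False grig_d_spine_vertex by (metis grig_relations)
    ultimately show ?thesis by (simp add: at_vertex_outside)
  qed
  then show ?thesis unfolding conj_d_fixed_iff by (simp add: fun_eq_iff)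
qed

lemma length_1_cases: "length w = 1 \<Longrightarrow> w = [True] \<or> w = [False]"
  by (cases w) auto

lemma commuting_fixes_level_one:
  assumes g: "tree_map g" "inj g" and comm: "g \<circ> s = s \<circ> g"
    and s: "\<And>w. s (True # w) = True # s1 w" "\<And>w. s (False # w) = False # s0 w"
    and not_conj: "\<And>h. tree_map h \<Longrightarrow> inj h \<Longrightarrow> h \<circ> s1 \<noteq> s0 \<circ> h"
  shows "g [True] = [True]" "g [False] = [False]" "sect g [True] \<circ> s1 = s1 \<circ> sect g [True]"
proof -
  let ?h = "sect g [True]"
  have h: "tree_map ?h" "inj ?h" using tree_map_sect[OF g(1)] inj_sect[OF g] by auto
  have "length (g [True]) = 1"
    using tree_map_length[OF g(1), of "[True]"] by simp
  then obtain b where b: "g [True] = [b]"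
    using length_1_cases by blast
  have g_True: "g (True # v) = b # ?h v" for v
    using tree_map_append[OF g(1), of "[True]" v] b by simp
  have g_s: "b # ?h (s1 w) = s (b # ?h w)" for w
    using fun_cong[OF comm, of "True # w"] s(1) g_True by simp
  show gT: "g [True] = [True]"
  proof (cases b)
    case False
    then have "?h \<circ> s1 = s0 \<circ> ?h" using g_s s(2) by (simp add: fun_eq_iff)
    then show ?thesis using not_conj h by blast
  qed (simp add: b)
  have "g [False] \<noteq> g [True]"
    using g(2) by (simp add: inj_eq)
  then show "g [False] = [False]"
    using gT length_1_cases[of "g [False]"] tree_map_length[OF g(1), of "[False]"] by auto
  show "?h \<circ> s1 = s1 \<circ> ?h"
    using g_s s(1) gT b by (simp add: fun_eq_iff)
qed

lemma not_conj_grig_b_id: "inj h \<Longrightarrow> h \<circ> grig_b \<noteq> id \<circ> h"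
proof
  assume "inj h" "h \<circ> grig_b = id \<circ> h"
  then have "h (grig_b [False, False]) = h [False, False]" by (metis comp_apply id_apply)
  then show False using \<open>inj h\<close> by (simp add: inj_eq)
qed

lemma not_conj_grig_a:
  assumes "s1 [False] = [False]" "tree_map h"
  shows "h \<circ> s1 \<noteq> grig_a \<circ> h"
proof
  assume "h \<circ> s1 = grig_a \<circ> h"
  then have "h [False] = grig_a (h [False])" using assms(1) by (metis comp_apply)
  then show False
    using length_1_cases tree_map_length[OF assms(2), of "[False]"] by fastforce
qed

lemma commutes_grig_d_descent:
  assumes g: "tree_map g" "inj g" "g \<circ> grig_d = grig_d \<circ> g"
  defines "h \<equiv> sect g [True, True, True]"
  shows "g [False] = [False]" "g (True # True # True # w) = True # True # True # h w"
    "tree_map h" "inj h" "h \<circ> grig_d = grig_d \<circ> h"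
proof -
  have d: "grig_d (True # w) = True # grig_b w" "grig_d (False # w) = False # id w"
    and b: "grig_b (True # w) = True # grig_c w" "grig_b (False # w) = False # grig_a w"
    and c: "grig_c (True # w) = True # grig_d w" "grig_c (False # w) = False # grig_a w" for w
    by simp_all
  have nc_d: "f \<circ> grig_b \<noteq> id \<circ> f" if "tree_map f" "inj f" for f
    using not_conj_grig_b_id that(2) .
  have nc_b: "f \<circ> grig_c \<noteq> grig_a \<circ> f" if "tree_map f" "inj f" for f
    using not_conj_grig_a[of grig_c f] that(1) by simp
  have nc_c: "f \<circ> grig_d \<noteq> grig_a \<circ> f" if "tree_map f" "inj f" for f
    using not_conj_grig_a[of grig_d f] that(1) by simp
  note level_d = commuting_fixes_level_one[OF g d nc_d]
  let ?h1 = "sect g [True]"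
  let ?h2 = "sect ?h1 [True]"
  have tree1: "tree_map ?h1" "inj ?h1" using tree_map_sect inj_sect g by blast+
  have tree2: "tree_map ?h2" "inj ?h2" using tree_map_sect inj_sect tree1 by blast+
  note level_b = commuting_fixes_level_one[OF tree1 level_d(3) b nc_b]
  note level_c = commuting_fixes_level_one[OF tree2 level_b(3) c nc_c]
  have h: "h = sect ?h2 [True]"
    unfolding h_def using sect_append[of g "[True]" "[True, True]"] sect_append[of ?h1 "[True]" "[True]"]
    by simp
  show "g [False] = [False]" by (rule level_d(2))
  show "tree_map h" "inj h" unfolding h using tree2 tree_map_sect inj_sect by blast+
  show "h \<circ> grig_d = grig_d \<circ> h" unfolding h by (rule level_c(3))
  have "g (True # v) = True # ?h1 v" "?h1 (True # v) = True # ?h2 v" "?h2 (True # v) = True # h v" for v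
    using tree_map_append[OF g(1), of "[True]" v] tree_map_append[OF tree1(1), of "[True]" v]
      tree_map_append[OF tree2(1), of "[True]" v] level_d(1) level_b(1) level_c(1) h
    by simp_all
  then show "g (True # True # True # w) = True # True # True # h w" by simp
qed

lemma commutes_grig_d_fixes_spine_vertex:
  assumes "tree_map g" "inj g" "g \<circ> grig_d = grig_d \<circ> g"
  shows "g (spine_vertex j) = spine_vertex j"
  using assms
proof (induction j arbitrary: g)
  case 0
  show ?case using commutes_grig_d_descent(1)[OF 0] by (simp add: spine_vertex_def)
next
  case (Suc j)
  note descent = commutes_grig_d_descent[OF Suc.prems]
  have "sect g [True, True, True] (spine_vertex j) = spine_vertex j"
    by (rule Suc.IH[OF descent(3-5)])
  then show ?case
    using descent(2) by (simp add: spine_vertex_def replicate_add_3)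
qed

subsection \<open>A criterion for infinite generation\<close>

lemma sect_comp_fixed:
  assumes "tree_map f" "tree_map g" "g u = u"
  shows "sect (f \<circ> g) u = sect f u \<circ> sect g u"
  using sect_comp[OF assms(1,2)] assms(3) by simp

lemma subgroup_equal_sections:
  assumes Y: "subgroup Y Bij_UNIV" "\<And>y. y \<in> Y \<Longrightarrow> finite_state y"
    and fixed: "\<And>y. y \<in> Y \<Longrightarrow> y u = u" "\<And>y. y \<in> Y \<Longrightarrow> y u' = u'"
  shows "subgroup {y \<in> Y. sect y u = sect y u'} Bij_UNIV" (is "subgroup ?Z _")
proof -
  have tree: "tree_map y" "bij y" if "y \<in> Y" for y
    using Y(2)[OF that] by (auto simp: finite_state_def)
  have mult: "sect (y1 \<circ> y2) w = sect y1 w \<circ> sect y2 w"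
    if "y1 \<in> Y" "y2 \<in> Y" "y2 w = w" for y1 y2 w
    using sect_comp_fixed[OF tree(1)[OF that(1)] tree(1)[OF that(2)] that(3)] .
  show ?thesis
  proof (rule group.subgroupI[OF group_Bij_UNIV])
    show "?Z \<subseteq> carrier Bij_UNIV" "?Z \<noteq> {}"
      using subgroup.subset[OF Y(1)] subgroup.one_closed[OF Y(1)] by (auto simp: one_Bij_UNIV)
  next
    fix y
    assume y: "y \<in> ?Z"
    then have yY: "y \<in> Y" and y': "inv_fun y \<in> Y"
      using subgroup.m_inv_closed[OF Y(1)] tree by (auto simp: inv_Bij_UNIV)
    have inv_y: "inv_fun y \<circ> y = id" "y \<circ> inv_fun y = id"
      using inj_iff[THEN iffD1, OF bij_is_inj[OF tree(2)[OF yY]]]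
        surj_iff[THEN iffD1, OF bij_is_surj[OF tree(2)[OF yY]]] .
    have inv_u: "sect (inv_fun y) u \<circ> sect y u = id"
      using mult[OF y' yY fixed(1)[OF yY]] inv_y by simp
    have inv_u': "sect y u' \<circ> sect (inv_fun y) u' = id"
      using mult[OF yY y' fixed(2)[OF y']] inv_y by simp
    have "sect (inv_fun y) u = sect (inv_fun y) u \<circ> (sect y u' \<circ> sect (inv_fun y) u')"
      using inv_u' by simp
    also have "\<dots> = (sect (inv_fun y) u \<circ> sect y u) \<circ> sect (inv_fun y) u'"
      using y by (simp add: comp_assoc)
    also have "\<dots> = sect (inv_fun y) u'"
      using inv_u by simp
    finally show "inv\<^bsub>Bij_UNIV\<^esub> y \<in> ?Z"
      using y' tree[OF yY] by (simp add: inv_Bij_UNIV)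
  next
    fix y1 y2
    assume "y1 \<in> ?Z" "y2 \<in> ?Z"
    then show "y1 \<otimes>\<^bsub>Bij_UNIV\<^esub> y2 \<in> ?Z"
      using subgroup.m_closed[OF Y(1)] mult tree fixed by (auto simp: mult_Bij_UNIV)
  qed
qed

text \<open>Finitely many finite-state generators have only finitely many patterns of sections, so two
  of the vertices \<open>v j\<close> cannot be told apart by the generated subgroup.\<close>

lemma not_generated_if_sections_separate:
  fixes v :: "nat \<Rightarrow> 'a list"
  assumes Y: "subgroup Y Bij_UNIV" "\<And>y. y \<in> Y \<Longrightarrow> finite_state y"
    and fix_v: "\<And>y j. y \<in> Y \<Longrightarrow> y (v j) = v j"
    and separate: "\<And>j j'. j \<noteq> j' \<Longrightarrow> \<exists>y\<in>Y. sect y (v j) \<noteq> sect y (v j')"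
    and S: "finite S" "S \<subseteq> Y"
  shows "generate Bij_UNIV S \<noteq> Y"
proof
  assume gen: "generate Bij_UNIV S = Y"
  define pattern where "pattern j = restrict (\<lambda>s. sect s (v j)) S" for j
  have "range pattern \<subseteq> (\<Pi>\<^sub>E s\<in>S. range (sect s))"
    by (auto simp: pattern_def)
  moreover have "finite (\<Pi>\<^sub>E s\<in>S. range (sect s))"
    using S Y(2) by (intro finite_PiE) (auto simp: finite_state_def)
  ultimately have "finite (range pattern)"
    by (rule finite_subset)
  then have "\<not> inj pattern"
    using finite_imageD infinite_UNIV_nat by blast
  then obtain j j' where jj: "j \<noteq> j'" "pattern j = pattern j'"
    by (auto simp: inj_def)
  let ?Z = "{y \<in> Y. sect y (v j) = sect y (v j')}"
  have "S \<subseteq> ?Z"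
  proof
    fix s
    assume "s \<in> S"
    then show "s \<in> ?Z"
      using S(2) fun_cong[OF jj(2), of s] by (auto simp: pattern_def)
  qed
  moreover have "subgroup ?Z Bij_UNIV"
  proof (rule subgroup_equal_sections[OF Y])
    show "y (v j) = v j" "y (v j') = v j'" if "y \<in> Y" for y
      using that by (rule fix_v)+
  qed
  ultimately have "Y \<subseteq> ?Z"
    using gen group.generate_subgroup_incl[OF group_Bij_UNIV] by blast
  then show False
    using separate[OF jj(1)] by auto
qed

text \<open>Block \<open>t\<close> consists of the slots \<open>(t, r)\<close> with
  \<open>r < |J t|\<close>; the edge from \<open>(t, r)\<close> to \<open>(t, r + 1 mod |J t|)\<close> is labelled by \<open>label t r\<close>, the
  \<open>r\<close>-th element of \<open>J t\<close>, and is twisted when it closes the cycle.\<close>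

locale configuration_blocks =
  fixes n :: nat and c :: "nat set \<Rightarrow> nat" and J :: "nat \<Rightarrow> nat set" and m :: nat
  assumes bij_J: "bij_betw J {..<m} {I. I \<subseteq> {1..n} \<and> I \<noteq> {} \<and> c I \<noteq> 0}"
begin

abbreviation k :: "nat \<Rightarrow> nat" where
  "k t \<equiv> card (J t)"

definition label :: "nat \<Rightarrow> nat \<Rightarrow> nat" where
  "label t r = sorted_list_of_set (J t) ! r"

definition positions :: "(nat \<times> nat) set" where
  "positions = {(t, r). t < m \<and> r < k t}"

definition linked :: "family \<Rightarrow> nat \<Rightarrow> nat \<Rightarrow> bool" where
  "linked F t r \<longleftrightarrow> F (t, Suc r mod k t) = twist (Suc r = k t) (F (t, r))"

definition block_family :: "family \<Rightarrow> bool" where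
  "block_family F \<longleftrightarrow> (\<forall>x. F x \<in> grig_K) \<and> (\<forall>x. x \<notin> positions \<longrightarrow> F x = id)"

definition fam :: "nat \<Rightarrow> family set" where
  "fam i = {F. block_family F \<and> (\<forall>(t, r) \<in> positions. label t r = i \<longrightarrow> linked F t r)
                \<and> (\<forall>t<m. i \<notin> J t \<longrightarrow> (\<forall>r. F (t, r) = id))}"

definition H :: "nat \<Rightarrow> (bool list \<Rightarrow> bool list) set" where
  "H i = spread ` fam i"

lemma block_J:
  assumes "t < m"
  shows "J t \<subseteq> {1..n}" "J t \<noteq> {}" "c (J t) \<noteq> 0" "0 < k t"
proof -
  show J: "J t \<subseteq> {1..n}" "J t \<noteq> {}" "c (J t) \<noteq> 0"
    using bij_J assms by (auto simp: bij_betw_def)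
  then show "0 < k t"
    using finite_subset[OF J(1)] by (simp add: card_gt_0_iff)
qed

lemma finite_J: "t < m \<Longrightarrow> finite (J t)"
  using block_J(1) finite_subset by blast

lemma label_in_J: "t < m \<Longrightarrow> r < k t \<Longrightarrow> label t r \<in> J t"
  using finite_J[of t] nth_mem[of r "sorted_list_of_set (J t)"] by (simp add: label_def)

lemma label_onto:
  assumes "t < m" "i \<in> J t"
  shows "\<exists>r<k t. label t r = i"
proof -
  have "i \<in> set (sorted_list_of_set (J t))"
    using finite_J assms by simp
  then obtain r where "r < length (sorted_list_of_set (J t))" "sorted_list_of_set (J t) ! r = i"
    by (auto simp: in_set_conv_nth)
  then show ?thesis by (auto simp: label_def)
qed

lemma finite_positions: "finite positions"
proof -
  have "k t \<le> n" if "t < m" for t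
    using card_mono[OF _ block_J(1)[OF that]] by simp
  then have "positions \<subseteq> {..<m} \<times> {..<n}"
    by (auto simp: positions_def) (meson less_le_trans)
  then show ?thesis
    by (rule finite_subset) simp
qed

lemma mem_Inter_fam:
  assumes "I \<noteq> {}"
  shows "F \<in> (\<Inter>i\<in>I. fam i) \<longleftrightarrow> block_family F
    \<and> (\<forall>(t, r) \<in> positions. label t r \<in> I \<longrightarrow> linked F t r)
    \<and> (\<forall>t<m. \<not> I \<subseteq> J t \<longrightarrow> (\<forall>r. F (t, r) = id))"
  using assms by (auto simp: fam_def)

lemma block_familyD:
  assumes "block_family F"
  shows "F x \<in> grig_K" "bij (F x)" "x \<notin> positions \<Longrightarrow> F x = id"
  using assms bij_grig_K unfolding block_family_def by blast+

lemma grig_K_spread_block_family: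
  assumes "block_family F"
  shows "spread F \<in> grig_K"
proof (rule grig_K_spread)
  show "F x \<in> grig_K" for x
    using assms by (rule block_familyD)
  have "{x. F x \<noteq> id} \<subseteq> positions"
    using block_familyD(3)[OF assms] by blast
  then show "finite {x. F x \<noteq> id}"
    using finite_positions finite_subset by blast
qed

lemma famD:
  assumes "F \<in> fam i"
  shows "block_family F" "(t, r) \<in> positions \<Longrightarrow> label t r = i \<Longrightarrow> linked F t r"
    "t < m \<Longrightarrow> i \<notin> J t \<Longrightarrow> F (t, r) = id"
  using assms unfolding fam_def by blast+

lemma famI:
  assumes "block_family F" "\<And>t r. (t, r) \<in> positions \<Longrightarrow> label t r = i \<Longrightarrow> linked F t r"
    "\<And>t r. t < m \<Longrightarrow> i \<notin> J t \<Longrightarrow> F (t, r) = id"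
  shows "F \<in> fam i"
  using assms unfolding fam_def by blast

lemma fam_comp:
  assumes F: "F \<in> fam i" and G: "G \<in> fam i"
  shows "(\<lambda>x. F x \<circ> G x) \<in> fam i"
proof (rule famI)
  show "block_family (\<lambda>x. F x \<circ> G x)"
    using block_familyD[OF famD(1)[OF F]] block_familyD[OF famD(1)[OF G]] grig_K_comp
    unfolding block_family_def by simp
  show "linked (\<lambda>x. F x \<circ> G x) t r" if "(t, r) \<in> positions" "label t r = i" for t r
    using famD(2)[OF F that] famD(2)[OF G that] by (simp add: linked_def twist_comp)
  show "F (t, r) \<circ> G (t, r) = id" if "t < m" "i \<notin> J t" for t r
    using famD(3)[OF F that] famD(3)[OF G that] by simp
qed

lemma fam_id: "(\<lambda>x. id) \<in> fam i"
  by (rule famI) (simp_all add: block_family_def linked_def grig_K_id twist_id)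

lemma fam_inv:
  assumes F: "F \<in> fam i"
  shows "(\<lambda>x. inv_fun (F x)) \<in> fam i"
proof (rule famI)
  note block = block_familyD[OF famD(1)[OF F]]
  have inv_id: "inv_fun (id :: bool list \<Rightarrow> bool list) = id"
    by (simp add: inv_id)
  show "block_family (\<lambda>x. inv_fun (F x))"
    using block grig_K_inv inv_id unfolding block_family_def by simp
  show "linked (\<lambda>x. inv_fun (F x)) t r" if "(t, r) \<in> positions" "label t r = i" for t r
    using famD(2)[OF F that] block(2) by (simp add: linked_def inv_fun_twist)
  show "inv_fun (F (t, r)) = id" if "t < m" "i \<notin> J t" for t r
    using famD(3)[OF F that] inv_id by simp
qed

lemma spread_inv:
  assumes "block_family F"
  shows "inv_fun (spread F) = spread (\<lambda>x. inv_fun (F x))"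
proof (rule inv_fun_unique)
  have bij: "bij (F x)" for x
    using assms by (rule block_familyD)
  then show "bij (spread F)" by (rule bij_spread)
  have "(\<lambda>x. inv_fun (F x) \<circ> F x) = (\<lambda>x. id)"
    using inj_iff[THEN iffD1, OF bij_is_inj[OF bij]] by simp
  then show "spread (\<lambda>x. inv_fun (F x)) \<circ> spread F = id"
    by (metis spread_comp spread_id)
qed

lemma H_subset: "H i \<subseteq> carrier grigorchuk_group"
  using grig_K_spread_block_family grig_K_subset_grigorchuk_group by (auto simp: H_def fam_def)

lemma subgroup_H: "subgroup (H i) grigorchuk_group"
proof (rule group.subgroupI[OF group_grigorchuk_group])
  show "H i \<subseteq> carrier grigorchuk_group" by (rule H_subset)
  show "H i \<noteq> {}" using fam_id by (auto simp: H_def)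
next
  fix y
  assume y: "y \<in> H i"
  then obtain F where F: "F \<in> fam i" "y = spread F" by (auto simp: H_def)
  have "inv\<^bsub>grigorchuk_group\<^esub> y = inv_fun y"
    using H_subset y by (intro grigorchuk_group_simps(3)) blast
  also have "\<dots> = spread (\<lambda>x. inv_fun (F x))"
    unfolding F(2) using famD(1)[OF F(1)] by (rule spread_inv)
  finally show "inv\<^bsub>grigorchuk_group\<^esub> y \<in> H i"
    using fam_inv[OF F(1)] by (simp add: H_def)
next
  fix y z
  assume yz: "y \<in> H i" "z \<in> H i"
  then obtain F G where F: "F \<in> fam i" "y = spread F" "G \<in> fam i" "z = spread G"
    by (auto simp: H_def)
  have "y \<otimes>\<^bsub>grigorchuk_group\<^esub> z = y \<circ> z"
    using H_subset yz by (intro grigorchuk_group_simps(1)) blast+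
  also have "\<dots> = spread (\<lambda>x. F x \<circ> G x)"
    unfolding F(2,4) spread_comp ..
  finally show "y \<otimes>\<^bsub>grigorchuk_group\<^esub> z \<in> H i"
    using fam_comp[OF F(1) F(3)] by (simp add: H_def)
qed

lemma Inter_H_eq:
  assumes "I \<noteq> {}"
  shows "(\<Inter>i\<in>I. H i) = spread ` (\<Inter>i\<in>I. fam i)"
proof -
  from assms obtain j where "j \<in> I" by blast
  then show ?thesis
    unfolding H_def using image_INT[OF inj_spread, of I fam j] by simp
qed

lemma subgroup_Inter_H: "I \<noteq> {} \<Longrightarrow> subgroup (\<Inter>i\<in>I. H i) grigorchuk_group"
  using group.subgroups_Inter[OF group_grigorchuk_group, of "H ` I"] subgroup_H by auto

lemma Inter_fam_linked:
  assumes "F \<in> (\<Inter>i\<in>J t. fam i)" "t < m" "r < k t"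
  shows "linked F t r"
  using assms label_in_J[OF assms(2,3)] famD(2) by (auto simp: positions_def)

lemma Inter_fam_block_constant:
  assumes F: "F \<in> (\<Inter>i\<in>J t. fam i)" and t: "t < m"
  shows "r < k t \<Longrightarrow> F (t, r) = F (t, 0)"
proof (induction r)
  case (Suc r)
  then have "linked F t r" using Inter_fam_linked[OF F t] by simp
  then show ?case using Suc by (simp add: linked_def twist_def)
qed simp

lemma Inter_fam_block_conj_d:
  assumes F: "F \<in> (\<Inter>i\<in>J t. fam i)" and t: "t < m"
  shows "conj_d (F (t, 0)) = F (t, 0)"
proof -
  let ?r = "k t - 1"
  have r: "?r < k t" "Suc ?r = k t" using block_J(4)[OF t] by auto
  then have "F (t, 0) = conj_d (F (t, ?r))"
    using Inter_fam_linked[OF F t r(1)] by (simp add: linked_def twist_def)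
  then show ?thesis
    using Inter_fam_block_constant[OF F t r(1)] by simp
qed

lemma spine_witness_in_Inter_fam:
  assumes t0: "t0 < m"
  shows "(\<lambda>(t, r). if t = t0 \<and> r < k t0 then at_vertex (spine_vertex j) grig_t else id)
    \<in> (\<Inter>i\<in>J t0. fam i)" (is "?W \<in> _")
proof -
  have "?W x \<in> grig_K" for x
    using grig_K_at_vertex[OF grig_K_words(1)] grig_K_id by (auto split: prod.split)
  moreover have "?W x = id" if "x \<notin> positions" for x
    using that t0 by (auto simp: positions_def split: prod.split)
  ultimately have "block_family ?W"
    unfolding block_family_def by blast
  moreover have "linked ?W t r" if "(t, r) \<in> positions" for t r
  proof (cases "t = t0")
    case True
    then have "Suc r mod k t0 < k t0" using block_J(4)[OF t0] by simp
    then show ?thesis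
      using True that by (auto simp: positions_def linked_def twist_def conj_d_at_spine_vertex)
  qed (simp add: linked_def twist_id)
  moreover have "\<forall>t<m. \<not> J t0 \<subseteq> J t \<longrightarrow> (\<forall>r. ?W (t, r) = id)"
    by auto
  ultimately show ?thesis
    unfolding mem_Inter_fam[OF block_J(2)[OF t0]] by blast
qed

lemma Inter_H_block_fixes_spine:
  assumes t0: "t0 < m" and y: "y \<in> (\<Inter>i\<in>J t0. H i)"
  shows "y (slot (t0, 0) @ spine_vertex j) = slot (t0, 0) @ spine_vertex j"
proof -
  have ne: "J t0 \<noteq> {}" using block_J(2)[OF t0] .
  obtain F where F: "F \<in> (\<Inter>i\<in>J t0. fam i)" "y = spread F"
    using y unfolding Inter_H_eq[OF ne] by blast
  obtain i where "i \<in> J t0" using ne by blast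
  then have "F \<in> fam i" using F(1) by blast
  then have "F (t0, 0) \<in> grig_K"
    using famD(1) block_familyD(1) by blast
  then have "tree_map (F (t0, 0))" "inj (F (t0, 0))"
    using finite_state_grig_K by (auto simp: finite_state_def bij_is_inj)
  moreover have "F (t0, 0) \<circ> grig_d = grig_d \<circ> F (t0, 0)"
    using Inter_fam_block_conj_d[OF F(1) t0] by (simp add: conj_d_fixed_iff)
  ultimately have "F (t0, 0) (spine_vertex j) = spine_vertex j"
    by (rule commutes_grig_d_fixes_spine_vertex)
  then show ?thesis using F(2) by simp
qed

lemma Inter_H_block_separates:
  assumes t0: "t0 < m" and "j \<noteq> j'"
  shows "\<exists>y\<in>(\<Inter>i\<in>J t0. H i).
    sect y (slot (t0, 0) @ spine_vertex j) \<noteq> sect y (slot (t0, 0) @ spine_vertex j')"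
proof -
  let ?W = "\<lambda>(t, r). if t = t0 \<and> r < k t0 then at_vertex (spine_vertex j) grig_t else id"
  have "spread ?W \<in> (\<Inter>i\<in>J t0. H i)"
    unfolding Inter_H_eq[OF block_J(2)[OF t0]] using spine_witness_in_Inter_fam[OF t0] by (rule imageI)
  moreover have W0: "?W (t0, 0) = at_vertex (spine_vertex j) grig_t"
    using block_J(4)[OF t0] by simp
  then have "sect (spread ?W) (slot (t0, 0) @ spine_vertex j) = grig_t"
    unfolding sect_spread by (simp add: sect_at_vertex_self)
  moreover have "spine_vertex j' @ w \<noteq> spine_vertex j @ z" for w z
    using assms(2) replicate_True_False_append_eq[of "3 * j'" w "3 * j" z] by (auto simp: spine_vertex_def)
  then have "sect (spread ?W) (slot (t0, 0) @ spine_vertex j') = id"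
    unfolding sect_spread W0 by (rule sect_at_vertex_apart)
  ultimately show ?thesis
    using grig_t_neq_id by (intro bexI[of _ "spread ?W"]) simp_all
qed

lemma not_fg_Inter_H_block:
  assumes t0: "t0 < m"
  shows "\<not> fg_subgroup grigorchuk_group (\<Inter>i\<in>J t0. H i)"
proof
  let ?Y = "\<Inter>i\<in>J t0. H i"
  assume "fg_subgroup grigorchuk_group ?Y"
  then obtain S where S: "finite S" "S \<subseteq> ?Y" "generate grigorchuk_group S = ?Y"
    by (auto simp: fg_subgroup_def)
  have sub: "subgroup ?Y grigorchuk_group"
    by (rule subgroup_Inter_H[OF block_J(2)[OF t0]])
  have "generate Bij_UNIV S \<noteq> ?Y"
  proof (rule not_generated_if_sections_separate[where v = "\<lambda>j. slot (t0, 0) @ spine_vertex j"])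
    show "subgroup ?Y Bij_UNIV"
      using sub by (rule subgroup_Bij_UNIV_if_subgroup_grigorchuk_group)
    show "finite_state y" if "y \<in> ?Y" for y
      using subgroup.subset[OF sub] that by (intro finite_state_grigorchuk_group) blast
    show "y (slot (t0, 0) @ spine_vertex j) = slot (t0, 0) @ spine_vertex j" if "y \<in> ?Y" for y j
      using t0 that by (rule Inter_H_block_fixes_spine)
    show "\<exists>y\<in>?Y. sect y (slot (t0, 0) @ spine_vertex j) \<noteq> sect y (slot (t0, 0) @ spine_vertex j')"
      if "j \<noteq> j'" for j j'
      using t0 that by (rule Inter_H_block_separates)
    show "finite S" by (rule S(1))
    show "S \<subseteq> ?Y" by (rule S(2))
  qed
  moreover have "generate grigorchuk_group S = generate Bij_UNIV S"
    using S(2) subgroup.subset[OF sub] by (intro generate_grigorchuk_group) blast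
  ultimately show False using S(3) by simp
qed

end

lemma mod_rotate_cancel:
  fixes K :: nat
  assumes "Suc a + d = K" "r < K"
  shows "(Suc a + (r + d) mod K) mod K = r"
proof -
  have "(Suc a + (r + d) mod K) mod K = (Suc a + (r + d)) mod K"
    by (rule mod_add_right_eq)
  also have "Suc a + (r + d) = r + K"
    using assms(1) by simp
  finally show ?thesis
    using assms(2) by simp
qed

lemma mod_rotate_Suc:
  fixes K :: nat
  assumes "Suc a + d = K" "r < K" "r \<noteq> a"
  shows "(Suc r mod K + d) mod K = Suc ((r + d) mod K)"
proof (cases "r < a")
  case True
  then show ?thesis using assms by simp
next
  case False
  define e where "e = r - Suc a"
  have e: "r + d = e + K" "Suc e < K"
    using assms False by (simp_all add: e_def)
  then have "(r + d) mod K = e" by simp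
  show ?thesis
  proof (cases "Suc r = K")
    case True
    then show ?thesis using assms e_def \<open>(r + d) mod K = e\<close> by simp
  next
    case False
    then have "Suc r mod K + d = Suc e + K" using assms e(1) by simp
    moreover have "(Suc e + K) mod K = Suc e"
      using e(2) by (metis mod_add_self2 mod_less)
    ultimately show ?thesis using \<open>(r + d) mod K = e\<close> by simp
  qed
qed

locale cut_configuration = configuration_blocks +
  fixes I :: "nat set"
  assumes I_nonempty: "I \<noteq> {}"
    and cut: "\<And>t. t < m \<Longrightarrow> I \<subseteq> J t \<Longrightarrow> \<exists>r<k t. label t r \<notin> I"
begin

definition cut_point :: "nat \<Rightarrow> nat" where
  "cut_point t = (SOME r. r < k t \<and> label t r \<notin> I)"

lemma cut_point:
  assumes "t < m" "I \<subseteq> J t"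
  shows "cut_point t < k t" "label t (cut_point t) \<notin> I"
  using someI_ex[OF cut[OF assms]] unfolding cut_point_def by blast+

definition rot :: "nat \<Rightarrow> nat \<Rightarrow> nat" where
  "rot t j = (Suc (cut_point t) + j) mod k t"

definition offset :: "nat \<Rightarrow> nat \<Rightarrow> nat" where
  "offset t r = (r + (k t - Suc (cut_point t))) mod k t"

lemma rot_offset:
  assumes "t < m" "I \<subseteq> J t" "r < k t"
  shows "rot t (offset t r) = r"
  unfolding rot_def offset_def
proof (rule mod_rotate_cancel)
  show "Suc (cut_point t) + (k t - Suc (cut_point t)) = k t"
    using cut_point(1)[OF assms(1,2)] by simp
qed (rule assms(3))

lemma offset_Suc_mod:
  assumes "t < m" "I \<subseteq> J t" "r < k t" "r \<noteq> cut_point t"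
  shows "offset t (Suc r mod k t) = Suc (offset t r)"
  unfolding offset_def
proof (rule mod_rotate_Suc)
  show "Suc (cut_point t) + (k t - Suc (cut_point t)) = k t"
    using cut_point(1)[OF assms(1,2)] by simp
qed (use assms in auto)

lemma rot_Suc: "rot t (Suc j) = Suc (rot t j) mod k t"
  by (simp add: rot_def mod_Suc_eq)

text \<open>Walking once around block \<open>t\<close>, starting right after the cut edge, the value at each slot is
  forced by its predecessor across an edge labelled in \<open>I\<close>, and is taken from \<open>F\<close> otherwise.\<close>

fun propagate :: "nat \<Rightarrow> nat \<Rightarrow> family \<Rightarrow> bool list \<Rightarrow> bool list" where
  "propagate t 0 F = F (t, rot t 0)"
| "propagate t (Suc j) F = (if label t (rot t j) \<in> I
     then twist (Suc (rot t j) = k t) (propagate t j F) else F (t, rot t (Suc j)))"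

definition project :: "family \<Rightarrow> family" where
  "project F = (\<lambda>(t, r). if (t, r) \<in> positions \<and> I \<subseteq> J t then propagate t (offset t r) F else id)"

lemma propagate_comp: "propagate t j (\<lambda>x. F x \<circ> G x) = propagate t j F \<circ> propagate t j G"
proof -
  have "propagate t j (\<lambda>x. F x \<circ> G x) w = propagate t j F (propagate t j G w)" for w
    by (induction j arbitrary: w) (simp_all add: twist_apply)
  then show ?thesis by (simp add: fun_eq_iff)
qed

lemma project_comp: "project (\<lambda>x. F x \<circ> G x) = (\<lambda>x. project F x \<circ> project G x)"
  by (auto simp: project_def propagate_comp fun_eq_iff)

lemma propagate_id: "propagate t j (\<lambda>x. id) = id"
proof -
  have "propagate t j (\<lambda>x. id) w = w" for w
    by (induction j arbitrary: w) (simp_all add: twist_apply)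
  then show ?thesis by (simp add: fun_eq_iff)
qed

lemma project_id: "project (\<lambda>x. id) = (\<lambda>x. id)"
  by (auto simp: project_def propagate_id fun_eq_iff)

lemma grig_K_propagate: "(\<And>x. F x \<in> grig_K) \<Longrightarrow> propagate t j F \<in> grig_K"
  by (induction j) (simp_all add: grig_K_twist)

lemma bij_propagate: "(\<And>x. bij (F x)) \<Longrightarrow> bij (propagate t j F)"
  by (induction j) (simp_all add: bij_twist)

lemma bij_project: "(\<And>x. bij (F x)) \<Longrightarrow> bij (project F x)"
  by (auto simp: project_def bij_propagate split: prod.split)

lemma project_in_Inter_fam:
  assumes K: "\<And>x. F x \<in> grig_K"
  shows "project F \<in> (\<Inter>i\<in>I. fam i)"
proof -
  have "block_family (project F)"
    using grig_K_propagate[OF K] grig_K_id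
    by (auto simp: block_family_def project_def split: prod.split)
  moreover have "linked (project F) t r" if x: "(t, r) \<in> positions" "label t r \<in> I" for t r
  proof (cases "I \<subseteq> J t")
    case True
    have t: "t < m" "r < k t" using x(1) by (auto simp: positions_def)
    then have "Suc r mod k t < k t" by simp
    moreover have "r \<noteq> cut_point t" using cut_point(2)[OF t(1) True] x(2) by auto
    ultimately show ?thesis
      using t True x(2) rot_offset[OF t(1) True t(2)] offset_Suc_mod[OF t(1) True t(2)]
      by (simp add: linked_def project_def positions_def)
  qed (simp add: linked_def project_def twist_id)
  moreover have "\<forall>t<m. \<not> I \<subseteq> J t \<longrightarrow> (\<forall>r. project F (t, r) = id)"
    by (simp add: project_def)
  ultimately show ?thesis
    unfolding mem_Inter_fam[OF I_nonempty] by blast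
qed

lemma propagate_Inter_fam:
  assumes F: "F \<in> (\<Inter>i\<in>I. fam i)" and t: "t < m" "I \<subseteq> J t"
  shows "propagate t j F = F (t, rot t j)"
proof (induction j)
  case (Suc j)
  show ?case
  proof (cases "label t (rot t j) \<in> I")
    case True
    have "(t, rot t j) \<in> positions"
      using block_J(4)[OF t(1)] t(1) by (simp add: positions_def rot_def)
    then have "linked F t (rot t j)"
      using F True unfolding mem_Inter_fam[OF I_nonempty] by blast
    then show ?thesis using True Suc.IH by (simp add: linked_def rot_Suc)
  qed simp
qed simp

lemma project_Inter_fam:
  assumes F: "F \<in> (\<Inter>i\<in>I. fam i)"
  shows "project F = F"
proof
  fix x :: "nat \<times> nat"
  obtain t r where x: "x = (t, r)" by (cases x)
  show "project F x = F x"
  proof (cases "x \<in> positions \<and> I \<subseteq> J t")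
    case True
    then have "t < m" "r < k t" by (auto simp: x positions_def)
    then show ?thesis
      using True propagate_Inter_fam[OF F] rot_offset by (simp add: x project_def)
  next
    case False
    have block: "block_family F"
      using F unfolding mem_Inter_fam[OF I_nonempty] by blast
    have "F x = id"
    proof (cases "x \<in> positions")
      case True
      then have "t < m" "\<not> I \<subseteq> J t" using False by (auto simp: x positions_def)
      then show ?thesis using F unfolding x mem_Inter_fam[OF I_nonempty] by blast
    qed (rule block_familyD(3)[OF block])
    then show ?thesis
      using False by (auto simp: x project_def)
  qed
qed

definition generators :: "(bool list \<Rightarrow> bool list) set" where
  "generators = (\<lambda>(x, s). spread (project (single x s))) ` (positions \<times> {grig_t, grig_u, grig_v})"

lemma generators_subset: "generators \<subseteq> (\<Inter>i\<in>I. H i)"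
proof
  fix y
  assume "y \<in> generators"
  then obtain x s where s: "s \<in> grig_K" and y: "y = spread (project (single x s))"
    using grig_K_words(1-3) by (auto simp: generators_def)
  have "single x s z \<in> grig_K" for z
    using s grig_K_id by (simp add: single_def)
  then show "y \<in> (\<Inter>i\<in>I. H i)"
    unfolding y Inter_H_eq[OF I_nonempty] by (intro imageI project_in_Inter_fam)
qed

lemma bij_generate_generators:
  assumes "f \<in> generate Bij_UNIV generators"
  shows "bij f"
proof -
  have "generators \<subseteq> carrier grigorchuk_group"
    using generators_subset subgroup.subset[OF subgroup_Inter_H[OF I_nonempty]] by blast
  then have "generators \<subseteq> carrier Bij_UNIV"
    using finite_state_grigorchuk_group by (auto simp: carrier_Bij_UNIV finite_state_def)
  then show "bij f"
    using group.generate_in_carrier[OF group_Bij_UNIV] assms unfolding carrier_Bij_UNIV by blast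
qed

lemma spread_project_single_generated:
  assumes x: "x \<in> positions" and s: "s \<in> grig_K"
  shows "spread (project (single x s)) \<in> generate Bij_UNIV generators"
proof -
  let ?h = "\<lambda>s. spread (project (single x s))"
  have "?h \<in> hom Bij_UNIV Bij_UNIV"
  proof (rule hom_Bij_UNIVI)
    show "bij (?h f)" if "bij f" for f
    proof -
      have "bij (single x f y)" for y
        using that by (simp add: single_def)
      then show ?thesis by (intro bij_spread bij_project)
    qed
    show "?h (f \<circ> g) = ?h f \<circ> ?h g" for f g
    proof -
      have "single x (f \<circ> g) = (\<lambda>y. single x f y \<circ> single x g y)"
        by (rule ext) (simp add: single_def)
      then have "project (single x (f \<circ> g)) = (\<lambda>y. project (single x f) y \<circ> project (single x g) y)"
        by (simp only: project_comp)
      then show ?thesis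
        by (simp only: spread_comp)
    qed
  qed
  moreover have "{grig_t, grig_u, grig_v} \<subseteq> {f. bij f}"
    using grig_K_words bij_grig_K by blast
  ultimately have "?h ` grig_K = generate Bij_UNIV (?h ` {grig_t, grig_u, grig_v})"
    unfolding grig_K_def by (rule generate_Bij_UNIV_image)
  also have "\<dots> \<subseteq> generate Bij_UNIV generators"
    using x by (intro group.mono_generate[OF group_Bij_UNIV]) (auto simp: generators_def)
  finally show ?thesis
    using s by (blast intro: imageI)
qed

lemma spread_Inter_fam_generated:
  assumes F: "F \<in> (\<Inter>i\<in>I. fam i)"
  shows "spread F \<in> generate Bij_UNIV generators"
proof -
  have block: "block_family F"
    using F unfolding mem_Inter_fam[OF I_nonempty] by blast
  have "spread (project F) \<in> generate Bij_UNIV generators"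
  proof (rule multiplicative_finite_support[where \<Psi> = "\<lambda>F. spread (project F)"])
    show "spread (project (\<lambda>x. F x \<circ> G x)) = spread (project F) \<circ> spread (project G)" for F G
      by (simp only: project_comp spread_comp)
    show "spread (project (\<lambda>x. id)) = id"
      by (simp only: project_id spread_id)
    show "id \<in> generate Bij_UNIV generators"
      using generate.one[of Bij_UNIV generators] by (simp only: one_Bij_UNIV)
    show "f \<circ> g \<in> generate Bij_UNIV generators"
      if fg: "f \<in> generate Bij_UNIV generators" "g \<in> generate Bij_UNIV generators" for f g
    proof -
      have "f \<circ> g = f \<otimes>\<^bsub>Bij_UNIV\<^esub> g"
        using fg bij_generate_generators by (intro mult_Bij_UNIV[symmetric])
      then show ?thesis using generate.eng[OF fg] by (simp only:)
    qed
    have "{x. F x \<noteq> id} \<subseteq> positions"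
      using block_familyD(3)[OF block] by blast
    then show "finite {x. F x \<noteq> id}"
      using finite_positions finite_subset by blast
    show "spread (project (single x (F x))) \<in> generate Bij_UNIV generators" if "F x \<noteq> id" for x
    proof (rule spread_project_single_generated)
      show "x \<in> positions" using that block_familyD(3)[OF block] by blast
    qed (rule block_familyD(1)[OF block])
  qed
  then show ?thesis
    using project_Inter_fam[OF F] by simp
qed

lemma fg_Inter_H: "fg_subgroup grigorchuk_group (\<Inter>i\<in>I. H i)"
proof -
  let ?Y = "\<Inter>i\<in>I. H i"
  have sub: "subgroup ?Y grigorchuk_group"
    by (rule subgroup_Inter_H[OF I_nonempty])
  have "generate grigorchuk_group generators = ?Y"
  proof
    show "generate grigorchuk_group generators \<subseteq> ?Y"
      by (rule group.generate_subgroup_incl[OF group_grigorchuk_group generators_subset sub])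
    have "generate grigorchuk_group generators = generate Bij_UNIV generators"
      using generators_subset subgroup.subset[OF sub] by (intro generate_grigorchuk_group) blast
    moreover have "?Y \<subseteq> generate Bij_UNIV generators"
      unfolding Inter_H_eq[OF I_nonempty] using spread_Inter_fam_generated by blast
    ultimately show "?Y \<subseteq> generate grigorchuk_group generators"
      by simp
  qed
  moreover have "finite generators"
    using finite_positions by (simp add: generators_def)
  ultimately show ?thesis
    unfolding fg_subgroup_def using sub generators_subset by blast
qed

end

context configuration_blocks
begin

lemma realisable_configuration: "realisable grigorchuk_group n c"
  unfolding realisable_def
proof (intro exI conjI ballI allI impI)
  show "subgroup (H i) grigorchuk_group" for i
    by (rule subgroup_H)
next
  fix I
  assume I: "I \<subseteq> {1..n} \<and> I \<noteq> {}"
  show "fg_subgroup grigorchuk_group (\<Inter>i\<in>I. H i) \<longleftrightarrow> c I = 0"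
  proof (cases "c I = 0")
    case True
    have cut: "\<exists>r<k t. label t r \<notin> I" if t: "t < m" and IJ: "I \<subseteq> J t" for t
    proof -
      have "J t \<noteq> I" using block_J(3)[OF t] True by auto
      then obtain i where i: "i \<in> J t" "i \<notin> I" using IJ by blast
      then obtain r where "r < k t" "label t r = i" using label_onto[OF t] by blast
      then show ?thesis using i(2) by blast
    qed
    interpret cut_configuration n c J m I
      by unfold_locales (use I cut in auto)
    show ?thesis using fg_Inter_H True by simp
  next
    case False
    then have "I \<in> {I. I \<subseteq> {1..n} \<and> I \<noteq> {} \<and> c I \<noteq> 0}"
      using I by simp
    then have "I \<in> J ` {..<m}"
      using bij_betw_imp_surj_on[OF bij_J] by simp
    then obtain t where "t < m" "I = J t" by blast
    then show ?thesis using not_fg_Inter_H_block False by simp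
  qed
qed

end

theorem corollary3p3:
  shows "intersection_saturated grigorchuk_group"
  unfolding intersection_saturated_def
proof (intro allI impI)
  fix n :: nat and c :: "nat set \<Rightarrow> nat"
  let ?C = "{I. I \<subseteq> {1..n} \<and> I \<noteq> {} \<and> c I \<noteq> 0}"
  have "finite ?C"
    by (rule finite_subset[of _ "Pow {1..n}"]) auto
  then obtain J where "bij_betw J {0..<card ?C} ?C"
    using ex_bij_betw_nat_finite by blast
  then interpret configuration_blocks n c J "card ?C"
    by unfold_locales (simp add: atLeast0LessThan)
  show "realisable grigorchuk_group n c"
    by (rule realisable_configuration)
qed

end
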